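(* Let $G$ be split with root system of type $G_2$, simple roots $\alpha_1$ (short) and $\alpha_2$ (long), and let $\widetilde G$ be an $n$-fold Brylinski--Deligne cover associated with a Weyl-invariant quadratic form $Q$. If $n_{\alpha_2}=3n_{\alpha_1}$, then $$f_X(\Phi_+^\vee)=f_Y(\Phi_+)=\frac{1}{3n_{\alpha_1}}\{1,4,5\}\cup\frac{1}{n_{\alpha_1}}\{1,2,3\}.$$ If $n_{\alpha_1}=n_{\alpha_2}$ $(=n_\alpha)$, then $f_X(\Phi^\vee_+)=f_Y(\Phi_+)=\frac{1}{n_\alpha}[1,5]$.
   Context: $[a,b]$ denotes $\{a,\dots,b\}$. Notation: $\omega_\alpha$ fundamental weights, $\omega^\vee_\alpha$ fundamental coweights, $\rho^\vee=\sum_{\alpha\in\Delta}\omega_\alpha^\vee$. $B_Q(y,z)=Q(y+z)-Q(y)-Q(z)$, $Y_{Q,n}=\{y\in Y:B_Q(y,z)\in n\mathbf Z\ \forall z\in Y\}$, $n_\alpha=n/\gcd(n,Q(\alpha^\vee))$, and $\tilde n_\alpha$ ($\alpha\in\Phi$) defined by $\mathbf Z\alpha^\vee\cap Y_{Q,n}=\mathbf Z\tilde n_\alpha\alpha^\vee$ (for type $G_2$ one has $\tilde n_\alpha=n_\alpha$). $f_X:\Phi_+^\vee\to\mathbf Q$, $f_X(\beta^\vee)=\sum_{\alpha\in\Delta}\langle\omega_\alpha/\tilde n_\alpha,\beta^\vee\rangle$; $f_Y:\Phi_+\to\mathbf Q$, $f_Y(\beta)=\langle\rho^\vee,\beta\rangle/\tilde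 n_\beta$. *)

theory Defs
  imports Main "HOL.Rat"
begin

text \<open>Root datum of the split group of type G2 (simply connected = adjoint, so the
cocharacter lattice Y is the coroot lattice).  Elements of Y are written in the basis
of simple coroots (alpha1^vee, alpha2^vee); roots are written in the basis of simple
roots (alpha1 short, alpha2 long).\<close>

type_synonym cochar = "int \<times> int"
type_synonym root = "int \<times> int"

definition G2_pos_roots :: "root set" where
  "G2_pos_roots = {(1,0), (0,1), (1,1), (2,1), (3,1), (3,2)}"

definition G2_simple_roots :: "root set" where
  "G2_simple_roots = {(1,0), (0,1)}"

text \<open>Pairing of a root with a cocharacter: Cartan integers
 <alpha1,alpha1^v>=2, <alpha1,alpha2^v>=-1, <alpha2,alpha1^v>=-3, <alpha2,alpha2^v>=2.\<close>
fun pair :: "root \<Rightarrow> cochar \<Rightarrow> int" where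
  "pair (a,b) (y1,y2) = a * (2*y1 - y2) + b * (-3*y1 + 2*y2)"

text \<open>W-invariant form on roots with (alpha1,alpha1)=2, (alpha1,alpha2)=-3,
(alpha2,alpha2)=6; coroot beta^v = 2 beta/(beta,beta) in the coroot basis.\<close>
fun rnorm :: "root \<Rightarrow> int" where
  "rnorm (a,b) = 2*a*a - 6*a*b + 6*b*b"

fun coroot :: "root \<Rightarrow> cochar" where
  "coroot (a,b) = ((2*a) div rnorm (a,b), (6*b) div rnorm (a,b))"

definition G2_pos_coroots :: "cochar set" where
  "G2_pos_coroots = coroot ` G2_pos_roots"

fun refl :: "root \<Rightarrow> cochar \<Rightarrow> cochar" where
  "refl \<alpha> y = (fst y - pair \<alpha> y * fst (coroot \<alpha>), snd y - pair \<alpha> y * snd (coroot \<alpha>))"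

definition is_quadratic_form :: "(cochar \<Rightarrow> int) \<Rightarrow> bool" where
  "is_quadratic_form Q \<longleftrightarrow> (\<exists>a b c. \<forall>y1 y2. Q (y1,y2) = a*y1^2 + b*y1*y2 + c*y2^2)"

definition weyl_invariant :: "(cochar \<Rightarrow> int) \<Rightarrow> bool" where
  "weyl_invariant Q \<longleftrightarrow> (\<forall>\<alpha>\<in>G2_simple_roots. \<forall>y. Q (refl \<alpha> y) = Q y)"

definition BQ :: "(cochar \<Rightarrow> int) \<Rightarrow> cochar \<Rightarrow> cochar \<Rightarrow> int" where
  "BQ Q y z = Q (fst y + fst z, snd y + snd z) - Q y - Q z"

definition YQn :: "(cochar \<Rightarrow> int) \<Rightarrow> int \<Rightarrow> cochar set" where
  "YQn Q n = {y. \<forall>z. n dvd BQ Q y z}"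

definition n_root :: "(cochar \<Rightarrow> int) \<Rightarrow> int \<Rightarrow> root \<Rightarrow> int" where
  "n_root Q n \<alpha> = n div gcd n (Q (coroot \<alpha>))"

definition ntilde :: "(cochar \<Rightarrow> int) \<Rightarrow> int \<Rightarrow> root \<Rightarrow> int" where
  "ntilde Q n \<alpha> = int (LEAST k::nat. k > 0 \<and>
      (int k * fst (coroot \<alpha>), int k * snd (coroot \<alpha>)) \<in> YQn Q n)"

text \<open>f_X(beta^v) = sum over simple alpha of <omega_alpha/ntilde_alpha, beta^v>;
<omega_alpha1, y> = y1, <omega_alpha2, y> = y2.\<close>
definition fX :: "(cochar \<Rightarrow> int) \<Rightarrow> int \<Rightarrow> cochar \<Rightarrow> rat" where
  "fX Q n c = of_int (fst c) / of_int (ntilde Q n (1,0)) + of_int (snd c) / of_int (ntilde Q n (0,1))"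

text \<open>f_Y(beta) = <rho^v, beta>/ntilde_beta with <rho^v, a alpha1 + b alpha2> = a + b.\<close>
definition fY :: "(cochar \<Rightarrow> int) \<Rightarrow> int \<Rightarrow> root \<Rightarrow> rat" where
  "fY Q n \<beta> = of_int (fst \<beta> + snd \<beta>) / of_int (ntilde Q n \<beta>)"

end

theory Submission
  imports Defs
begin

text \<open>A Weyl-invariant form is a multiple of the basic form, and for every root \<alpha> one has
  \<open>B\<^sub>Q(\<alpha>\<^sup>\<or>, y) = Q(\<alpha>\<^sup>\<or>) \<langle>\<alpha>, y\<rangle>\<close>. In type G2 every root pairs to 1 with some
  cocharacter, so \<open>k \<alpha>\<^sup>\<or> \<in> Y\<^sub>Q\<^sub>,\<^sub>n\<close> iff \<open>n\<close> divides \<open>k Q(\<alpha>\<^sup>\<or>)\<close>, i.e. \<open>\<tilde>n\<^sub>\<alpha> = n\<^sub>\<alpha>\<close>.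
  Moreover \<open>Q(\<alpha>\<^sup>\<or>)\<close> only depends on the length of \<alpha>, so both \<open>f\<^sub>X\<close> and \<open>f\<^sub>Y\<close> take
  six explicit values in \<open>1/n\<^sub>\<alpha>\<^sub>1\<close> and \<open>1/n\<^sub>\<alpha>\<^sub>2\<close>; the two cases are then arithmetic.\<close>

lemma weyl_invariant_quadratic_formE:
  assumes "is_quadratic_form Q" and "weyl_invariant Q"
  obtains c where "\<And>y1 y2. Q (y1,y2) = c * (3*y1^2 - 3*y1*y2 + y2^2)"
proof -
  obtain a b c where Q: "\<And>y1 y2. Q (y1,y2) = a*y1^2 + b*y1*y2 + c*y2^2"
    using assms(1) unfolding is_quadratic_form_def by blast
  have "Q (refl (1,0) (0,1)) = Q (0,1)" and "Q (refl (0,1) (1,0)) = Q (1,0)"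
    using assms(2) unfolding weyl_invariant_def G2_simple_roots_def by blast+
  then have "a + b = 0" and "b = -3*c"
    by (simp_all add: Q)
  then have "Q (y1,y2) = c * (3*y1^2 - 3*y1*y2 + y2^2)" for y1 y2
    by (simp add: Q algebra_simps)
  then show thesis
    by (rule that)
qed

lemma BQ_coroot_multiple:
  assumes "is_quadratic_form Q" and "weyl_invariant Q" and "\<alpha> \<in> G2_pos_roots"
  shows "BQ Q (k * fst (coroot \<alpha>), k * snd (coroot \<alpha>)) z = k * Q (coroot \<alpha>) * pair \<alpha> z"
proof -
  obtain c where Q: "\<And>y1 y2. Q (y1,y2) = c * (3*y1^2 - 3*y1*y2 + y2^2)"
    using weyl_invariant_quadratic_formE[OF assms(1,2)] by blast
  obtain z1 z2 where z: "z = (z1, z2)"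
    by fastforce
  show ?thesis
    using assms(3) unfolding G2_pos_roots_def z BQ_def
    by (auto simp: Q algebra_simps power2_eq_square)
qed

lemma G2_pair_eq_1:
  assumes "\<alpha> \<in> G2_pos_roots"
  shows "\<exists>z. pair \<alpha> z = 1"
proof -
  have "pair (1,0) (0,-1) = 1" "pair (0,1) (-1,-1) = 1" "pair (1,1) (0,1) = 1"
       "pair (2,1) (1,0) = 1" "pair (3,1) (0,-1) = 1" "pair (3,2) (0,1) = 1"
    by simp_all
  then show ?thesis
    using assms unfolding G2_pos_roots_def by blast
qed

lemma coroot_multiple_in_YQn_iff:
  assumes "is_quadratic_form Q" and "weyl_invariant Q" and "\<alpha> \<in> G2_pos_roots"
  shows "(k * fst (coroot \<alpha>), k * snd (coroot \<alpha>)) \<in> YQn Q n \<longleftrightarrow> n dvd k * Q (coroot \<alpha>)"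
proof -
  obtain z where "pair \<alpha> z = 1"
    using G2_pair_eq_1[OF assms(3)] ..
  then have "(\<forall>z. n dvd k * Q (coroot \<alpha>) * pair \<alpha> z) \<longleftrightarrow> n dvd k * Q (coroot \<alpha>)"
    by (metis dvd_mult2 mult_1_right)
  then show ?thesis
    unfolding YQn_def by (simp add: BQ_coroot_multiple[OF assms])
qed

lemma dvd_mult_iff_div_gcd_dvd:
  fixes n m k :: int
  assumes "n \<noteq> 0"
  shows "n dvd k * m \<longleftrightarrow> n div gcd n m dvd k"
proof -
  define g where "g = gcd n m"
  have "g \<noteq> 0"
    using assms by (simp add: g_def)
  have n: "n = n div g * g" and m: "m = m div g * g"
    by (simp_all add: g_def)
  have "n dvd k * m \<longleftrightarrow> n div g dvd k * (m div g)"
    using \<open>g \<noteq> 0\<close> by (subst (1 2) n, subst m) (simp add: ac_simps)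
  also have "\<dots> \<longleftrightarrow> n div g dvd k"
    using div_gcd_coprime[of n m] assms
    by (simp add: g_def coprime_dvd_mult_left_iff)
  finally show ?thesis
    by (simp add: g_def)
qed

lemma n_root_pos:
  assumes "n > 0"
  shows "n_root Q n \<alpha> > 0"
  using assms unfolding n_root_def by (simp add: pos_imp_zdiv_pos_iff zdvd_imp_le)

lemma Least_pos_dvd_nat_eq:
  fixes N :: int
  assumes "N > 0"
  shows "int (LEAST k::nat. k > 0 \<and> N dvd int k) = N"
proof -
  have "(LEAST k::nat. k > 0 \<and> N dvd int k) = nat N"
  proof (rule Least_equality)
    fix k :: nat
    assume "0 < k \<and> N dvd int k"
    then show "nat N \<le> k"
      using zdvd_imp_le by fastforce
  qed (use assms in simp)
  then show ?thesis
    using assms by simp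
qed

lemma ntilde_eq_n_root:
  assumes "n > 0" and "is_quadratic_form Q" and "weyl_invariant Q" and "\<alpha> \<in> G2_pos_roots"
  shows "ntilde Q n \<alpha> = n_root Q n \<alpha>"
proof -
  have "(int k * fst (coroot \<alpha>), int k * snd (coroot \<alpha>)) \<in> YQn Q n \<longleftrightarrow> n_root Q n \<alpha> dvd int k"
    for k
    using coroot_multiple_in_YQn_iff[OF assms(2-4)] dvd_mult_iff_div_gcd_dvd assms(1)
    by (simp add: n_root_def)
  then show ?thesis
    unfolding ntilde_def using Least_pos_dvd_nat_eq[OF n_root_pos[OF assms(1)]] by simp
qed

lemma n_root_short:
  assumes "is_quadratic_form Q" and "weyl_invariant Q" and "\<alpha> \<in> {(1,1), (2,1)}"
  shows "n_root Q n \<alpha> = n_root Q n (1,0)"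
proof -
  obtain c where Q: "\<And>y1 y2. Q (y1,y2) = c * (3*y1^2 - 3*y1*y2 + y2^2)"
    using weyl_invariant_quadratic_formE[OF assms(1,2)] by blast
  show ?thesis
    using assms(3) by (auto simp: n_root_def Q)
qed

lemma n_root_long:
  assumes "is_quadratic_form Q" and "weyl_invariant Q" and "\<alpha> \<in> {(3,1), (3,2)}"
  shows "n_root Q n \<alpha> = n_root Q n (0,1)"
proof -
  obtain c where Q: "\<And>y1 y2. Q (y1,y2) = c * (3*y1^2 - 3*y1*y2 + y2^2)"
    using weyl_invariant_quadratic_formE[OF assms(1,2)] by blast
  show ?thesis
    using assms(3) by (auto simp: n_root_def Q)
qed

lemma fX_image_G2:
  fixes N1 N2 :: rat
  assumes "n > 0" and "is_quadratic_form Q" and "weyl_invariant Q"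
  defines "N1 \<equiv> of_int (n_root Q n (1,0))" and "N2 \<equiv> of_int (n_root Q n (0,1))"
  shows "fX Q n ` G2_pos_coroots =
    {1/N1, 1/N2, 1/N1 + 3/N2, 2/N1 + 3/N2, 1/N1 + 1/N2, 1/N1 + 2/N2}"
proof -
  have coroots: "G2_pos_coroots = {(1,0), (0,1), (1,3), (2,3), (1,1), (1,2)}"
    unfolding G2_pos_coroots_def G2_pos_roots_def by simp
  have "fX Q n c = of_int (fst c) / N1 + of_int (snd c) / N2" for c
    using ntilde_eq_n_root[OF assms(1-3)]
    by (simp add: fX_def N1_def N2_def G2_pos_roots_def)
  then show ?thesis
    unfolding coroots by simp
qed

lemma fY_image_G2:
  fixes N1 N2 :: rat
  assumes "n > 0" and "is_quadratic_form Q" and "weyl_invariant Q"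
  defines "N1 \<equiv> of_int (n_root Q n (1,0))" and "N2 \<equiv> of_int (n_root Q n (0,1))"
  shows "fY Q n ` G2_pos_roots = {1/N1, 1/N2, 2/N1, 3/N1, 4/N2, 5/N2}"
proof -
  have "ntilde Q n (1,0) = n_root Q n (1,0)" "ntilde Q n (1,1) = n_root Q n (1,0)"
    "ntilde Q n (2,1) = n_root Q n (1,0)" "ntilde Q n (0,1) = n_root Q n (0,1)"
    "ntilde Q n (3,1) = n_root Q n (0,1)" "ntilde Q n (3,2) = n_root Q n (0,1)"
    using ntilde_eq_n_root[OF assms(1-3)] n_root_short[OF assms(2,3)] n_root_long[OF assms(2,3)]
    by (simp_all add: G2_pos_roots_def)
  then show ?thesis
    by (simp add: G2_pos_roots_def fY_def N1_def N2_def)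
qed

theorem lemma3p6:
  fixes Q :: "int \<times> int \<Rightarrow> int" and n :: int
  assumes "n > 0" and "is_quadratic_form Q" and "weyl_invariant Q"
  shows "(n_root Q n (0,1) = 3 * n_root Q n (1,0) \<longrightarrow>
           fX Q n ` G2_pos_coroots = fY Q n ` G2_pos_roots \<and>
           fY Q n ` G2_pos_roots =
             (\<lambda>k. of_int k / of_int (3 * n_root Q n (1,0))) ` {1,4,5}
             \<union> (\<lambda>k. of_int k / of_int (n_root Q n (1,0))) ` {1,2,3})
       \<and> (n_root Q n (1,0) = n_root Q n (0,1) \<longrightarrow>
           fX Q n ` G2_pos_coroots = fY Q n ` G2_pos_roots \<and>
           fY Q n ` G2_pos_roots =
             (\<lambda>k. of_int k / of_int (n_root Q n (1,0))) ` {1..5})"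
proof -
  define N :: rat where "N = of_int (n_root Q n (1,0))"
  have "N > 0"
    using n_root_pos[OF assms(1)] by (simp add: N_def)
  note fX = fX_image_G2[OF assms, folded N_def] and fY = fY_image_G2[OF assms, folded N_def]
  show ?thesis
  proof (intro conjI impI)
    assume "n_root Q n (0,1) = 3 * n_root Q n (1,0)"
    then have N2: "of_int (n_root Q n (0,1)) = 3 * N"
      by (simp add: N_def)
    have "1/N + 3/(3*N) = 2/N" "2/N + 3/(3*N) = 3/N"
      "1/N + 1/(3*N) = 4/(3*N)" "1/N + 2/(3*N) = 5/(3*N)"
      using \<open>N > 0\<close> by (simp_all add: field_simps)
    then show "fX Q n ` G2_pos_coroots = fY Q n ` G2_pos_roots"
      unfolding fX fY N2 by simp
    show "fY Q n ` G2_pos_roots = (\<lambda>k. of_int k / of_int (3 * n_root Q n (1,0))) ` {1,4,5}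
             \<union> (\<lambda>k. of_int k / of_int (n_root Q n (1,0))) ` {1,2,3}"
      unfolding fY N2 by (auto simp: N_def)
  next
    assume "n_root Q n (1,0) = n_root Q n (0,1)"
    then have N2: "of_int (n_root Q n (0,1)) = N"
      by (simp add: N_def)
    have "{1..5::int} = {1,2,3,4,5}"
      by auto
    then show "fX Q n ` G2_pos_coroots = fY Q n ` G2_pos_roots"
      and "fY Q n ` G2_pos_roots = (\<lambda>k. of_int k / of_int (n_root Q n (1,0))) ` {1..5}"
      unfolding fX fY N2 by (auto simp: N_def add_divide_distrib[symmetric])
  qed
qed

end
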